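(* For every $w_0\in V$ and every $(a,b)\in\partial A_1\times V$, $$\mathbb{E}_{w_0}\big[G(a,b)^2\big]\le 2\,\mathbb{E}_{w_0}\big[G(a,b)\big]\Big(\sup_{w'\in V}\mathbb{E}_{w'}\big[G(a,b)\big]+\sup_{(w,y)\in V\times\partial A_2}g_{(w,y)}(a,b)\Big).$$
   Context: Fix $d\ge3$; $(X_k)_{k\ge0}$ is simple random walk on $\mathbb{Z}^d$, $P_x$ its law from $x$, $H_A=\inf\{k\ge0:X_k\in A\}$, $\theta$ the time shift, and $\partial A=\{x\in A:\exists y\notin A,\|x-y\|=1\}$. Let $r$ be large and $s=s(r)>0$ with $s=o(r)$. $A_1$ is either $\{x:\|x\|<r\}$ or $\{x:\mathrm{dist}(x,\mathfrak{H}_{r-s})\le s\}$ with $\mathfrak{H}_{r-s}$ a discrete hypercube of edge length $r-s$; $A_2=\{x:\mathrm{dist}(x,x')>2s\ \forall x'\in A_1\}$; $V=\partial\{x:\mathrm{dist}(x,x')\le s\text{ for some }x'\in A_1\}$. For $w\in V$, $y\in\partial A_2$, $(a,b)\in\partial A_1\times V$, let $g_{(w,y)}(a,b)$ be the probability, for simple random walk started at $w$ conditioned on $X_{H_{\partial A_2}}=y$, that the walk hits $A_1$ before $\partial A_2$, its first point in $A_1$ is $a$, and its last visit to $V$ before time $H_{\partial A_2}$ is at $b$. Set $g_\Delta\equiv0$ for a cemetery state $\Delta$. Clothesline process: for a walk started at $w_0\in V$ set $D_0=0$, $R_1=H_{\partial A_2}$, and recursively $D_k=H_V\circ\theta_{R_k}+R_k$,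 $R_{k+1}=H_{\partial A_2}\circ\theta_{D_k}+D_k$; let $T_\Delta=\inf\{k\ge1:R_k=\infty\}$ (a.s. finite). Put $(W_k,Y_k)=(X_{D_{k-1}},X_{R_k})$ for $k<T_\Delta$ and $(W_k,Y_k)=\Delta$ for $k\ge T_\Delta$. Let $(\xi_k)_{k\ge1}$ be i.i.d. Exp(1), independent of the walk. The soft local time is $G(a,b)=\sum_{k=1}^{T_\Delta}\xi_k\,g_{(W_k,Y_k)}(a,b)$, and $\mathbb{E}_{w'}$ denotes expectation when the walk starts at $w'\in V$. *)

theory Defs
  imports "HOL-Probability.Probability"
begin

type_synonym 'd pt = "int ^ 'd"

definition edist :: "'d::finite pt \<Rightarrow> 'd pt \<Rightarrow> real" where
  "edist x y = sqrt (\<Sum>i\<in>UNIV. (real_of_int (x$i - y$i))^2)"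

definition bdry :: "'d::finite pt set \<Rightarrow> 'd pt set" where
  "bdry A = {x\<in>A. \<exists>y. y \<notin> A \<and> edist x y = 1}"

definition ball_set :: "real \<Rightarrow> 'd::finite pt set" where
  "ball_set r = {x. edist x 0 < r}"

definition cube_set :: "real \<Rightarrow> 'd::finite pt set" where
  "cube_set L = {x. \<forall>i. 2 * \<bar>real_of_int (x$i)\<bar> \<le> L}"

definition nbhd :: "real \<Rightarrow> 'd::finite pt set \<Rightarrow> 'd pt set" where
  "nbhd s A = {x. \<exists>x'\<in>A. edist x x' \<le> s}"

definition A2_of :: "real \<Rightarrow> 'd::finite pt set \<Rightarrow> 'd pt set" where
  "A2_of s A1 = {x. \<forall>x'\<in>A1. edist x x' > 2 * s}"

definition V_of :: "real \<Rightarrow> 'd::finite pt set \<Rightarrow> 'd pt set" where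
  "V_of s A1 = bdry (nbhd s A1)"

definition unit_steps :: "'d::finite pt set" where
  "unit_steps = {v. \<exists>i. v = (\<chi> j. if j = i then 1 else 0) \<or> v = (\<chi> j. if j = i then -1 else 0)}"

definition srw_steps :: "'d::finite pt stream measure" where
  "srw_steps = stream_space (measure_pmf (pmf_of_set unit_steps))"

definition walk :: "'d::finite pt \<Rightarrow> 'd pt stream \<Rightarrow> nat \<Rightarrow> 'd pt" where
  "walk x \<omega> k = x + (\<Sum>i<k. \<omega> !! i)"

text \<open>first time \<ge> n at which the path is in A (= n + H_A o theta_n)\<close>
definition hit_from :: "'a set \<Rightarrow> (nat \<Rightarrow> 'a) \<Rightarrow> nat \<Rightarrow> nat option" where
  "hit_from A p n = (if \<exists>k\<ge>n. p k \<in> A then Some (LEAST k. n \<le> k \<and> p k \<in> A) else None)"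

definition gfun :: "real \<Rightarrow> 'd::finite pt set \<Rightarrow> 'd pt \<Rightarrow> 'd pt \<Rightarrow> 'd pt \<Rightarrow> 'd pt \<Rightarrow> real" where
  "gfun s A1 w y a b =
    (let B = bdry (A2_of s A1); V = V_of s A1;
         P = (\<lambda>E. measure srw_steps {\<omega> \<in> space srw_steps. E (walk w \<omega>)})
     in P (\<lambda>p. \<exists>t h. hit_from B p 0 = Some t \<and> p t = y \<and> hit_from A1 p 0 = Some h \<and> h < t
                  \<and> p h = a \<and> (\<exists>k<t. p k \<in> V) \<and> p (GREATEST k. k < t \<and> p k \<in> V) = b)
        / P (\<lambda>p. \<exists>t. hit_from B p 0 = Some t \<and> p t = y))"

text \<open>clothesline times: cl_D k = D_k, cl_R k = R_(k+1); None = infinity\<close>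
primrec cl_D :: "'a set \<Rightarrow> 'a set \<Rightarrow> (nat \<Rightarrow> 'a) \<Rightarrow> nat \<Rightarrow> nat option" where
  "cl_D B V p 0 = Some 0"
| "cl_D B V p (Suc k) = Option.bind (Option.bind (cl_D B V p k) (hit_from B p)) (hit_from V p)"

definition cl_R :: "'a set \<Rightarrow> 'a set \<Rightarrow> (nat \<Rightarrow> 'a) \<Rightarrow> nat \<Rightarrow> nat option" where
  "cl_R B V p k = Option.bind (cl_D B V p k) (hit_from B p)"

definition joint :: "('d::finite pt stream \<times> real stream) measure" where
  "joint = srw_steps \<Otimes>\<^sub>M stream_space (density lborel (exponential_density 1))"

text \<open>soft local time G(a,b) for the walk started at w0; term k is the (k+1)-th summand,
  with g_Delta = 0 once R_(k+1) = infinity\<close>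
definition softG :: "real \<Rightarrow> 'd::finite pt set \<Rightarrow> 'd pt \<Rightarrow> 'd pt \<Rightarrow> 'd pt
                     \<Rightarrow> 'd pt stream \<times> real stream \<Rightarrow> ennreal" where
  "softG s A1 w0 a b z =
    (let p = walk w0 (fst z); B = bdry (A2_of s A1); V = V_of s A1 in
     (\<Sum>k. ennreal (snd z !! k) *
        (case cl_R B V p k of None \<Rightarrow> 0
         | Some t \<Rightarrow> ennreal (gfun s A1 (p (the (cl_D B V p k))) (p t) a b))))"

end

theory Submission
  imports Defs
begin

text \<open>
  The soft local time is G = \<Sum>k. \<xi>_k c_k, where c_k = g_(W_k,Y_k)(a,b) depends only on the walk and
  the \<xi>_k are independent Exp(1). Integrating out the \<xi>_k first, E[\<xi>_j \<xi>_k] = 1 + [j = k] gives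
  E[G^2 | walk] = 2 \<Sum>j. c_j (c_j + \<Sum>k>j. c_k). The diagonal part is at most (sup g) c_j, because
  every W_k lies on V and every Y_k on the boundary of A_2. In the cross part, \<Sum>k>j. c_k is the
  unweighted soft local time of the walk restarted at time D_j, at a point of V; splitting according
  to the value of D_j, the Markov property bounds its conditional mean by sup_(w' \<in> V) E_w' G.
  Summing over j and using E G = E (\<Sum>k. c_k) gives the claim.
\<close>

section \<open>Series and integrals over i.i.d. streams\<close>

lemma ennreal_suminf_comm: "(\<Sum>i. \<Sum>j. f i j :: ennreal) = (\<Sum>j. \<Sum>i. f i j)"
proof -
  interpret pair_sigma_finite "count_space (UNIV::nat set)" "count_space (UNIV::nat set)"
    by (intro pair_sigma_finite.intro) (auto intro: sigma_finite_measure_count_space)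
  have "(\<Sum>i. \<Sum>j. f i j) = (\<integral>\<^sup>+i. \<integral>\<^sup>+j. f i j \<partial>count_space UNIV \<partial>count_space UNIV)"
    by (simp add: nn_integral_count_space_nat)
  also have "\<dots> = (\<integral>\<^sup>+j. \<integral>\<^sup>+i. f i j \<partial>count_space UNIV \<partial>count_space UNIV)"
    by (rule Fubini') (simp add: pair_measure_countable)
  also have "\<dots> = (\<Sum>j. \<Sum>i. f i j)"
    by (simp add: nn_integral_count_space_nat)
  finally show ?thesis .
qed

lemma suminf_single: "(\<Sum>r. if r = i then f r else 0) = (f i :: 'a::{t2_space,comm_monoid_add})"
  by (rule sums_unique[OF sums_single, symmetric])

lemma suminf_if_le_eq_suminf_shift:
  "(\<Sum>k. if j \<le> k then c k else 0) = (\<Sum>m. c (j + m) :: 'a::{t2_space,comm_monoid_add})"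
proof -
  have "(\<Sum>m. (\<lambda>k. if j \<le> k then c k else 0) (j + m)) = (\<Sum>k. if j \<le> k then c k else 0)"
    by (rule suminf_mono_reindex) (auto simp: strict_mono_def image_iff le_iff_add)
  then show ?thesis by simp
qed

lemma ennreal_suminf_split_head: "(\<Sum>m. f m) = f 0 + (\<Sum>m. f (Suc m) :: ennreal)"
proof -
  have "f sums ((\<Sum>m. f (Suc m)) + f 0)"
    by (intro sums_Suc summable_sums summableI)
  then show ?thesis by (simp add: sums_iff add.commute)
qed

lemma (in prob_space) nn_integral_stream_space_stake_shift:
  assumes "f \<in> borel_measurable (stream_space M)"
  shows "(\<integral>\<^sup>+\<omega>. f \<omega> \<partial>stream_space M)
       = (\<integral>\<^sup>+\<omega>. \<integral>\<^sup>+\<omega>'. f (stake n \<omega> @- \<omega>') \<partial>stream_space M \<partial>stream_space M)"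
  using assms
proof (induction n arbitrary: f)
  case 0
  interpret S: prob_space "stream_space M" by (rule prob_space_stream_space)
  show ?case by (simp add: S.emeasure_space_1)
next
  case (Suc n)
  interpret S: prob_space "stream_space M" by (rule prob_space_stream_space)
  note [measurable] = Suc.prems
  have "(\<integral>\<^sup>+\<omega>. f \<omega> \<partial>stream_space M) = (\<integral>\<^sup>+x. \<integral>\<^sup>+\<omega>. f (x ## \<omega>) \<partial>stream_space M \<partial>M)"
    by (rule nn_integral_stream_space) simp
  also have "\<dots> = (\<integral>\<^sup>+x. \<integral>\<^sup>+\<omega>. \<integral>\<^sup>+\<omega>'. f (x ## (stake n \<omega> @- \<omega>')) \<partial>stream_space M \<partial>stream_space M \<partial>M)"
    by (intro nn_integral_cong Suc.IH) simp
  also have "\<dots> = (\<integral>\<^sup>+\<omega>. \<integral>\<^sup>+\<omega>'. f (stake (Suc n) \<omega> @- \<omega>') \<partial>stream_space M \<partial>stream_space M)"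
  proof (subst nn_integral_stream_space[of "\<lambda>\<omega>. \<integral>\<^sup>+\<omega>'. f (stake (Suc n) \<omega> @- \<omega>') \<partial>stream_space M"])
    show "(\<lambda>\<omega>. \<integral>\<^sup>+\<omega>'. f (stake (Suc n) \<omega> @- \<omega>') \<partial>stream_space M) \<in> borel_measurable (stream_space M)"
      by measurable
  qed simp
  finally show ?case .
qed

lemma (in prob_space) nn_integral_stream_space_snth:
  assumes [measurable]: "f \<in> borel_measurable M"
  shows "(\<integral>\<^sup>+\<omega>. f (\<omega> !! i) \<partial>stream_space M) = (\<integral>\<^sup>+x. f x \<partial>M)"
proof -
  interpret S: prob_space "stream_space M" by (rule prob_space_stream_space)
  have "(\<integral>\<^sup>+\<omega>. f (\<omega> !! i) \<partial>stream_space M)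
       = (\<integral>\<^sup>+\<omega>. \<integral>\<^sup>+\<omega>'. f (\<omega>' !! 0) \<partial>stream_space M \<partial>stream_space M)"
    by (subst nn_integral_stream_space_stake_shift[where n = i]) simp_all
  also have "\<dots> = (\<integral>\<^sup>+x. \<integral>\<^sup>+\<omega>. f ((x ## \<omega>) !! 0) \<partial>stream_space M \<partial>M)"
    by (simp add: S.emeasure_space_1 nn_integral_stream_space)
  finally show ?thesis by (simp add: S.emeasure_space_1)
qed

lemma (in prob_space) nn_integral_stream_space_snth_mult:
  assumes [measurable]: "f \<in> borel_measurable M" "g \<in> borel_measurable M" and "i \<noteq> k"
  shows "(\<integral>\<^sup>+\<omega>. f (\<omega> !! i) * g (\<omega> !! k) \<partial>stream_space M) = (\<integral>\<^sup>+x. f x \<partial>M) * (\<integral>\<^sup>+x. g x \<partial>M)"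
proof -
  have indep: "(\<integral>\<^sup>+\<omega>. f (\<omega> !! i) * g (\<omega> !! k) \<partial>stream_space M) = (\<integral>\<^sup>+x. f x \<partial>M) * (\<integral>\<^sup>+x. g x \<partial>M)"
    if [measurable]: "f \<in> borel_measurable M" "g \<in> borel_measurable M" and "i < k" for f g i k
  proof -
    have "(\<integral>\<^sup>+\<omega>. f (\<omega> !! i) * g (\<omega> !! k) \<partial>stream_space M)
         = (\<integral>\<^sup>+\<omega>. \<integral>\<^sup>+\<omega>'. f (\<omega> !! i) * g (\<omega>' !! (k - Suc i)) \<partial>stream_space M \<partial>stream_space M)"
      using \<open>i < k\<close>
      by (subst nn_integral_stream_space_stake_shift[where n = "Suc i"])
         (simp_all add: shift_snth del: stake.simps)
    also have "\<dots> = (\<integral>\<^sup>+x. f x \<partial>M) * (\<integral>\<^sup>+x. g x \<partial>M)"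
      by (simp add: nn_integral_cmult nn_integral_multc nn_integral_stream_space_snth)
    finally show ?thesis .
  qed
  show ?thesis
    using \<open>i \<noteq> k\<close> indep[of f g i k] indep[of g f k i] by (cases "i < k") (simp_all add: mult.commute)
qed

section \<open>Exponential weights\<close>

abbreviation exp1 :: "real measure" where
  "exp1 \<equiv> density lborel (exponential_density 1)"

lemma prob_space_exp1: "prob_space exp1"
  by (rule prob_space_exponential_density) simp

lemma nn_integral_exp1_power: "(\<integral>\<^sup>+x. ennreal x ^ i \<partial>exp1) = ennreal (fact i)"
proof -
  have "(\<integral>\<^sup>+x. ennreal x ^ i \<partial>exp1) = (\<integral>\<^sup>+x. ennreal (erlang_density 0 1 x * x ^ i) \<partial>lborel)"
    by (subst nn_integral_density)
       (auto intro!: nn_integral_cong simp: ennreal_mult'[symmetric] ennreal_power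
             exponential_density_def erlang_density_def)
  also have "\<dots> = ennreal (fact i)"
    by (subst nn_integral_erlang_ith_moment) simp_all
  finally show ?thesis .
qed

text \<open>E[\<xi>_j \<xi>_k] = 1 + [j = k], split symmetrically so that the double sum folds onto j \<le> k.\<close>

lemma nn_integral_exp1_snth_mult:
  "(\<integral>\<^sup>+\<xi>. ennreal (\<xi> !! j) * ennreal (\<xi> !! k) \<partial>stream_space exp1) = of_bool (j \<le> k) + of_bool (k \<le> j)"
proof (cases "j = k")
  case True
  then show ?thesis
    using prob_space.nn_integral_stream_space_snth[OF prob_space_exp1, of "\<lambda>x. ennreal x ^ 2" j]
      nn_integral_exp1_power[of 2] by (simp add: power2_eq_square numeral_2_eq_2)
next
  case False
  then show ?thesis
    using prob_space.nn_integral_stream_space_snth_mult[OF prob_space_exp1, of ennreal ennreal j k]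
      nn_integral_exp1_power[of 1] by auto
qed

lemma nn_integral_exp1_weighted_sum:
  "(\<integral>\<^sup>+\<xi>. (\<Sum>k. ennreal (\<xi> !! k) * c k) \<partial>stream_space exp1) = (\<Sum>k. c k)"
  using prob_space.nn_integral_stream_space_snth[OF prob_space_exp1, of ennreal]
    nn_integral_exp1_power[of 1]
  by (simp add: nn_integral_suminf nn_integral_multc)

lemma nn_integral_exp1_weighted_sum_square:
  "(\<integral>\<^sup>+\<xi>. (\<Sum>k. ennreal (\<xi> !! k) * c k)\<^sup>2 \<partial>stream_space exp1) = 2 * (\<Sum>j. c j * (\<Sum>m. c (j + m)))"
proof -
  let ?U = "\<lambda>j k. if j \<le> k then c j * c k else 0"
  have fold: "(\<Sum>k. ?U j k) = c j * (\<Sum>m. c (j + m))" for j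
    using suminf_if_le_eq_suminf_shift[of j "\<lambda>k. c j * c k"] by simp
  have "(\<integral>\<^sup>+\<xi>. (\<Sum>k. ennreal (\<xi> !! k) * c k)\<^sup>2 \<partial>stream_space exp1)
      = (\<integral>\<^sup>+\<xi>. (\<Sum>j. \<Sum>k. c j * c k * (ennreal (\<xi> !! j) * ennreal (\<xi> !! k))) \<partial>stream_space exp1)"
    by (simp add: power2_eq_square ennreal_suminf_cmult[symmetric] ennreal_suminf_multc[symmetric]
                  ac_simps del: ennreal_suminf_cmult ennreal_suminf_multc)
  also have "\<dots> = (\<Sum>j. \<Sum>k. c j * c k * (of_bool (j \<le> k) + of_bool (k \<le> j)))"
    by (simp add: nn_integral_suminf nn_integral_cmult nn_integral_exp1_snth_mult)
  also have "\<dots> = (\<Sum>j. \<Sum>k. ?U j k + ?U k j)"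
    by (intro suminf_cong) (simp add: distrib_left mult.commute)
  also have "\<dots> = (\<Sum>j. \<Sum>k. ?U j k) + (\<Sum>j. \<Sum>k. ?U k j)"
    by (simp add: suminf_add[symmetric] summableI)
  also have "(\<Sum>j. \<Sum>k. ?U k j) = (\<Sum>j. \<Sum>k. ?U j k)"
    by (rule ennreal_suminf_comm)
  also have "(\<Sum>j. \<Sum>k. ?U j k) = (\<Sum>j. c j * (\<Sum>m. c (j + m)))"
    by (simp only: fold)
  finally show ?thesis by (simp add: mult_2)
qed

section \<open>The clothesline decomposition of a path\<close>

lemma hit_from_Some_iff:
  "hit_from A p n = Some t \<longleftrightarrow> n \<le> t \<and> p t \<in> A \<and> (\<forall>k. n \<le> k \<and> k < t \<longrightarrow> p k \<notin> A)"
proof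
  assume h: "hit_from A p n = Some t"
  then have ex: "\<exists>k\<ge>n. p k \<in> A" and t: "t = (LEAST k. n \<le> k \<and> p k \<in> A)"
    by (auto simp: hit_from_def split: if_splits)
  from ex obtain k0 where "n \<le> k0 \<and> p k0 \<in> A" by auto
  then have "n \<le> t \<and> p t \<in> A" unfolding t by (rule LeastI)
  moreover have "\<forall>k. n \<le> k \<and> k < t \<longrightarrow> p k \<notin> A"
    unfolding t using not_less_Least by blast
  ultimately show "n \<le> t \<and> p t \<in> A \<and> (\<forall>k. n \<le> k \<and> k < t \<longrightarrow> p k \<notin> A)" by blast
next
  assume h: "n \<le> t \<and> p t \<in> A \<and> (\<forall>k. n \<le> k \<and> k < t \<longrightarrow> p k \<notin> A)"
  then have "(LEAST k. n \<le> k \<and> p k \<in> A) = t"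
    by (intro Least_equality) (auto simp: not_less[symmetric])
  with h show "hit_from A p n = Some t" by (auto simp: hit_from_def)
qed

lemma hit_from_None_iff: "hit_from A p n = None \<longleftrightarrow> (\<forall>k\<ge>n. p k \<notin> A)"
  by (auto simp: hit_from_def)

lemma hit_from_cong:
  assumes "hit_from A p n = Some t" "\<And>i. i \<le> t \<Longrightarrow> p i = q i"
  shows "hit_from A q n = Some t"
  using assms by (auto simp: hit_from_Some_iff)

lemma hit_from_shift:
  "hit_from A p (n + m) = map_option ((+) n) (hit_from A (\<lambda>i. p (n + i)) m)"
proof (cases "hit_from A (\<lambda>i. p (n + i)) m")
  case None
  have "p k \<notin> A" if "n + m \<le> k" for k
    using None that by (auto simp: hit_from_None_iff dest!: spec[of _ "k - n"])
  then show ?thesis unfolding None by (simp add: hit_from_None_iff)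
next
  case (Some t)
  then have t: "m \<le> t \<and> p (n + t) \<in> A \<and> (\<forall>k. m \<le> k \<and> k < t \<longrightarrow> p (n + k) \<notin> A)"
    by (simp add: hit_from_Some_iff)
  have "p k \<notin> A" if "n + m \<le> k" "k < n + t" for k
    using t that by (auto dest!: spec[of _ "k - n"])
  with t have "hit_from A p (n + m) = Some (n + t)"
    by (simp add: hit_from_Some_iff)
  then show ?thesis using Some by simp
qed

lemma cl_D_cong:
  assumes "cl_D B V p k = Some t" "\<And>i. i \<le> t \<Longrightarrow> p i = q i"
  shows "cl_D B V q k = Some t"
  using assms
proof (induction k arbitrary: t)
  case (Suc k)
  from Suc.prems(1) obtain d r where d: "cl_D B V p k = Some d" and r: "hit_from B p d = Some r"
    and t: "hit_from V p r = Some t"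
    by (auto simp: bind_eq_Some_conv)
  have dr: "d \<le> r" and rt: "r \<le> t" using r t by (simp_all add: hit_from_Some_iff)
  have "cl_D B V q k = Some d" using Suc.IH[OF d] Suc.prems(2) dr rt by simp
  moreover have "hit_from B q d = Some r" using hit_from_cong[OF r] Suc.prems(2) rt by simp
  moreover have "hit_from V q r = Some t" using hit_from_cong[OF t] Suc.prems(2) by simp
  ultimately show ?case by simp
qed simp

lemma cl_R_cong:
  assumes "cl_R B V p k = Some t" "\<And>i. i \<le> t \<Longrightarrow> p i = q i"
  shows "cl_R B V q k = Some t" and "cl_D B V q k = cl_D B V p k"
proof -
  from assms(1) obtain d where d: "cl_D B V p k = Some d" and r: "hit_from B p d = Some t"
    by (auto simp: cl_R_def bind_eq_Some_conv)
  have "d \<le> t" using r by (simp add: hit_from_Some_iff)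
  then have "cl_D B V q k = Some d" using cl_D_cong[OF d] assms(2) by simp
  with d hit_from_cong[OF r assms(2)]
  show "cl_R B V q k = Some t" "cl_D B V q k = cl_D B V p k" by (simp_all add: cl_R_def)
qed

lemma cl_D_None_add: "cl_D B V p k = None \<Longrightarrow> cl_D B V p (k + m) = None"
  by (induction m) auto

lemma cl_D_shift:
  assumes "cl_D B V p j = Some n"
  shows "cl_D B V p (j + m) = map_option ((+) n) (cl_D B V (\<lambda>i. p (n + i)) m)"
proof (induction m)
  case (Suc m)
  then show ?case
    by (cases "cl_D B V (\<lambda>i. p (n + i)) m")
       (simp_all add: hit_from_shift bind_map_option map_option_bind o_def)
qed (simp add: assms)

lemma cl_R_shift:
  assumes "cl_D B V p j = Some n"
  shows "cl_R B V p (j + m) = map_option ((+) n) (cl_R B V (\<lambda>i. p (n + i)) m)"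
  using cl_D_shift[OF assms, of m]
  by (cases "cl_D B V (\<lambda>i. p (n + i)) m") (simp_all add: cl_R_def hit_from_shift)

lemma cl_D_SucD:
  assumes "cl_D B V p (Suc k) = Some n"
  shows "\<exists>d t. cl_D B V p k = Some d \<and> cl_R B V p k = Some t \<and> d \<le> t \<and> t \<le> n \<and> p n \<in> V"
  using assms by (auto simp: bind_eq_Some_conv cl_R_def hit_from_Some_iff)

lemma cl_R_SomeD:
  assumes "cl_R B V p k = Some t"
  shows "\<exists>d. cl_D B V p k = Some d \<and> d \<le> t \<and> p t \<in> B"
  using assms by (auto simp: bind_eq_Some_conv cl_R_def hit_from_Some_iff)

lemma cl_D_in:
  assumes "cl_D B V p k = Some d" "p 0 \<in> V"
  shows "p d \<in> V"
  using assms by (cases k) (auto simp: bind_eq_Some_conv hit_from_Some_iff)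

text \<open>Term k is the paper's g_(W_(k+1),Y_(k+1)), with W_(k+1) = p D_k and Y_(k+1) = p R_(k+1).\<close>

definition cl_term :: "'a set \<Rightarrow> 'a set \<Rightarrow> ('a \<Rightarrow> 'a \<Rightarrow> ennreal) \<Rightarrow> (nat \<Rightarrow> 'a) \<Rightarrow> nat \<Rightarrow> ennreal" where
  "cl_term B V g p k =
    (case cl_R B V p k of None \<Rightarrow> 0 | Some t \<Rightarrow> g (p (the (cl_D B V p k))) (p t))"

definition cl_total :: "'a set \<Rightarrow> 'a set \<Rightarrow> ('a \<Rightarrow> 'a \<Rightarrow> ennreal) \<Rightarrow> (nat \<Rightarrow> 'a) \<Rightarrow> ennreal" where
  "cl_total B V g p = (\<Sum>k. cl_term B V g p k)"

lemma cl_term_cong: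
  assumes "cl_R B V p k = Some t" "\<And>i. i \<le> t \<Longrightarrow> p i = q i"
  shows "cl_term B V g q k = cl_term B V g p k"
proof -
  obtain d where "cl_D B V p k = Some d" "d \<le> t" using cl_R_SomeD[OF assms(1)] by blast
  with assms cl_R_cong[OF assms] show ?thesis by (simp add: cl_term_def)
qed

lemma cl_term_le:
  assumes "p 0 \<in> V" "\<And>w y. w \<in> V \<Longrightarrow> y \<in> B \<Longrightarrow> g w y \<le> c"
  shows "cl_term B V g p k \<le> c"
proof (cases "cl_R B V p k")
  case (Some t)
  then obtain d where d: "cl_D B V p k = Some d" and "p t \<in> B"
    using cl_R_SomeD by blast
  with Some cl_D_in[OF d assms(1)] assms(2) show ?thesis
    by (simp add: cl_term_def)
qed (simp add: cl_term_def)

lemma cl_term_shift: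
  assumes "cl_D B V p j = Some n"
  shows "cl_term B V g p (j + m) = cl_term B V g (\<lambda>i. p (n + i)) m"
  using cl_R_shift[OF assms, of m] cl_D_shift[OF assms, of m]
  by (cases "cl_R B V (\<lambda>i. p (n + i)) m")
     (auto simp: cl_term_def cl_R_def bind_eq_Some_conv)

lemma cl_term_None_add:
  assumes "cl_D B V p j = None"
  shows "cl_term B V g p (j + m) = 0"
  using cl_D_None_add[OF assms, of m] by (simp add: cl_term_def cl_R_def)

lemma if_cong_determined:
  assumes "\<And>p q. P p \<Longrightarrow> (\<And>i. i \<le> n \<Longrightarrow> p i = q i) \<Longrightarrow> P q \<and> F q = F p"
    and "\<And>i. i \<le> n \<Longrightarrow> p i = q i"
  shows "(if P p then F p else 0) = (if P q then F q else (0::'b::zero))"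
proof -
  have qp: "\<And>i. i \<le> n \<Longrightarrow> q i = p i" using assms(2) by metis
  consider "P p" | "P q" | "\<not> P p" "\<not> P q" by blast
  then show ?thesis
  proof cases
    case 1
    with assms(1)[OF 1 assms(2)] show ?thesis by simp
  next
    case 2
    with assms(1)[OF 2 qp] show ?thesis by simp
  qed simp
qed

text \<open>Localising term j on the event D_(j+1) = n turns the strong Markov property at D_(j+1)
  into the simple Markov property at the fixed time n.\<close>

definition cl_term_ending_at ::
    "'a set \<Rightarrow> 'a set \<Rightarrow> ('a \<Rightarrow> 'a \<Rightarrow> ennreal) \<Rightarrow> (nat \<Rightarrow> 'a) \<Rightarrow> nat \<Rightarrow> nat \<Rightarrow> ennreal" where
  "cl_term_ending_at B V g p j n = (if cl_D B V p (Suc j) = Some n then cl_term B V g p j else 0)"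

lemma cl_term_ending_at_cong:
  assumes "\<And>i. i \<le> n \<Longrightarrow> p i = q i"
  shows "cl_term_ending_at B V g p j n = cl_term_ending_at B V g q j n"
  unfolding cl_term_ending_at_def
proof (rule if_cong_determined[OF _ assms])
  fix p q :: "nat \<Rightarrow> 'a"
  assume D: "cl_D B V p (Suc j) = Some n" and pq: "\<And>i. i \<le> n \<Longrightarrow> p i = q i"
  obtain t where "cl_R B V p j = Some t" "t \<le> n" using cl_D_SucD[OF D] by blast
  then show "cl_D B V q (Suc j) = Some n \<and> cl_term B V g q j = cl_term B V g p j"
    using cl_D_cong[OF D pq] cl_term_cong[of B V p j t q g] pq by simp
qed

lemma cl_term_ending_at_eq_if:
  "cl_D B V p (Suc j) = Some n0
   \<Longrightarrow> cl_term_ending_at B V g p j n = (if n = n0 then cl_term B V g p j else 0)"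
  by (auto simp: cl_term_ending_at_def simp del: cl_D.simps)

lemma suminf_cl_term_ending_at_le: "(\<Sum>n. cl_term_ending_at B V g p j n) \<le> cl_term B V g p j"
proof (cases "cl_D B V p (Suc j)")
  case (Some n0)
  then show ?thesis by (simp add: cl_term_ending_at_eq_if suminf_single del: cl_D.simps)
qed (simp add: cl_term_ending_at_def del: cl_D.simps)

lemma cl_term_ending_at_neq_0D: "cl_term_ending_at B V g p j n \<noteq> 0 \<Longrightarrow> p n \<in> V"
  by (metis cl_D_SucD cl_term_ending_at_def)

lemma cl_term_mult_tail:
  "cl_term B V g p j * (\<Sum>m. cl_term B V g p (Suc j + m))
     = (\<Sum>n. cl_term_ending_at B V g p j n * (\<Sum>m. cl_term B V g p (Suc j + m)))"
proof (cases "cl_D B V p (Suc j)")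
  case None
  then have "cl_term B V g p (Suc j + m) = 0" for m
    by (rule cl_term_None_add)
  with None show ?thesis by (simp add: cl_term_ending_at_def del: cl_D.simps)
next
  case (Some n0)
  then show ?thesis by (simp add: cl_term_ending_at_eq_if suminf_single del: cl_D.simps)
qed

lemma cl_term_ending_at_mult_tail:
  "cl_term_ending_at B V g p j n * (\<Sum>m. cl_term B V g p (Suc j + m))
     = cl_term_ending_at B V g p j n * cl_total B V g (\<lambda>i. p (n + i))"
proof (cases "cl_D B V p (Suc j) = Some n")
  case True
  then show ?thesis by (simp only: cl_total_def cl_term_shift)
qed (simp add: cl_term_ending_at_def del: cl_D.simps)

section \<open>Simple random walk\<close>

lemma walk_0 [simp]: "walk w \<omega> 0 = w"
  by (simp add: walk_def)

lemma walk_shift: "walk w \<omega> (n + i) = walk (walk w \<omega> n) (sdrop n \<omega>) i"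
  by (induction i) (simp_all add: walk_def sdrop_snth add.assoc)

lemma walk_cong_stake:
  assumes "stake n \<omega> = stake n \<omega>'" "i \<le> n"
  shows "walk w \<omega> i = walk w \<omega>' i"
proof -
  have "\<omega> !! j = \<omega>' !! j" if "j < n" for j
    using arg_cong[OF assms(1), of "\<lambda>l. l ! j"] that by simp
  with assms(2) show ?thesis by (simp add: walk_def)
qed

lemma measurable_stream_space_stake_determined:
  fixes f :: "('a::countable) stream \<Rightarrow> 'b"
  assumes "\<And>\<omega> \<omega>'. stake n \<omega> = stake n \<omega>' \<Longrightarrow> f \<omega> = f \<omega>'" and "range f \<subseteq> space N"
  shows "f \<in> measurable (stream_space (measure_pmf P)) N"
proof -
  have "stake n \<in> measurable (stream_space (measure_pmf P)) (count_space UNIV)"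
  proof -
    have "sets (stream_space (measure_pmf P)) = sets (stream_space (count_space UNIV :: 'a measure))"
      by (rule sets_stream_space_cong) (simp add: sets_measure_pmf_count_space)
    then show ?thesis
      using measurable_stake[of n] by (simp cong: measurable_cong_sets)
  qed
  then have "(\<lambda>\<omega>. f (stake n \<omega> @- sconst undefined)) \<in> measurable (stream_space (measure_pmf P)) N"
    by (rule measurable_compose) (use assms(2) in auto)
  moreover have "f (stake n \<omega> @- sconst undefined) = f \<omega>" for \<omega>
    by (rule assms(1)) (simp add: stake_shift)
  ultimately show ?thesis by simp
qed

lemma measurable_walk_determined:
  assumes "\<And>p q. (\<And>i. i \<le> n \<Longrightarrow> p i = q i) \<Longrightarrow> F p = F q" and "range F \<subseteq> space N"
  shows "(\<lambda>\<omega>. F (walk w \<omega>)) \<in> measurable srw_steps N"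
  unfolding srw_steps_def
proof (rule measurable_stream_space_stake_determined)
  fix \<omega> \<omega>' :: "'a pt stream"
  assume "stake n \<omega> = stake n \<omega>'"
  then show "F (walk w \<omega>) = F (walk w \<omega>')"
    by (intro assms(1)) (rule walk_cong_stake)
qed (use assms(2) in auto)

lemma measurable_cl_term_walk [measurable]:
  "(\<lambda>\<omega>. cl_term B V g (walk w \<omega>) k) \<in> borel_measurable srw_steps"
proof -
  have sum: "cl_term B V g p k = (\<Sum>t. if cl_R B V p k = Some t then cl_term B V g p k else 0)" for p
  proof (cases "cl_R B V p k")
    case (Some t0)
    then have "(if cl_R B V p k = Some t then cl_term B V g p k else 0)
             = (if t = t0 then cl_term B V g p k else 0)" for t
      by auto
    then show ?thesis by (simp add: suminf_single)
  qed (simp add: cl_term_def)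
  have "(\<lambda>\<omega>. if cl_R B V (walk w \<omega>) k = Some t then cl_term B V g (walk w \<omega>) k else 0)
      \<in> borel_measurable srw_steps" for t
  proof (rule measurable_walk_determined[of t])
    fix p q :: "nat \<Rightarrow> 'a pt"
    assume pq: "\<And>i. i \<le> t \<Longrightarrow> p i = q i"
    show "(if cl_R B V p k = Some t then cl_term B V g p k else 0)
        = (if cl_R B V q k = Some t then cl_term B V g q k else 0)"
    proof (rule if_cong_determined[OF _ pq])
      fix p q :: "nat \<Rightarrow> 'a pt"
      assume "cl_R B V p k = Some t" "\<And>i. i \<le> t \<Longrightarrow> p i = q i"
      from cl_R_cong(1)[OF this] cl_term_cong[OF this]
      show "cl_R B V q k = Some t \<and> cl_term B V g q k = cl_term B V g p k" by blast
    qed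
  qed simp
  then show ?thesis
    by (subst sum) (rule borel_measurable_suminf_order)
qed

lemma measurable_cl_total_walk [measurable]:
  "(\<lambda>\<omega>. cl_total B V g (walk w \<omega>)) \<in> borel_measurable srw_steps"
  unfolding cl_total_def by measurable

lemma measurable_cl_term_ending_at_walk [measurable]:
  "(\<lambda>\<omega>. cl_term_ending_at B V g (walk w \<omega>) j n) \<in> borel_measurable srw_steps"
  by (rule measurable_walk_determined[of n]) (blast intro: cl_term_ending_at_cong, simp)

lemma nn_integral_srw_steps_stake_shift:
  "f \<in> borel_measurable srw_steps \<Longrightarrow> (\<integral>\<^sup>+\<omega>. f \<omega> \<partial>srw_steps)
     = (\<integral>\<^sup>+\<omega>. \<integral>\<^sup>+\<omega>'. f (stake n \<omega> @- \<omega>') \<partial>srw_steps \<partial>srw_steps)"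
  unfolding srw_steps_def
  by (rule prob_space.nn_integral_stream_space_stake_shift[OF prob_space_measure_pmf])

lemma nn_integral_srw_markov:
  fixes f :: "'a::finite pt stream \<Rightarrow> ennreal"
  assumes f: "\<And>\<omega> \<omega>'. stake n \<omega> = stake n \<omega>' \<Longrightarrow> f \<omega> = f \<omega>'"
    and h [measurable]: "\<And>x. h x \<in> borel_measurable srw_steps"
  shows "(\<integral>\<^sup>+\<omega>. f \<omega> * h (walk w \<omega> n) (sdrop n \<omega>) \<partial>srw_steps)
       = (\<integral>\<^sup>+\<omega>. f \<omega> * (\<integral>\<^sup>+\<omega>'. h (walk w \<omega> n) \<omega>' \<partial>srw_steps) \<partial>srw_steps)"
proof -
  have [measurable]: "f \<in> borel_measurable srw_steps"
    unfolding srw_steps_def by (rule measurable_stream_space_stake_determined[OF f]) auto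
  have [measurable]: "(\<lambda>\<omega>. walk w \<omega> n) \<in> measurable srw_steps (count_space UNIV)"
    by (rule measurable_walk_determined[of n]) simp_all
  have "sdrop n \<in> measurable srw_steps srw_steps"
    unfolding srw_steps_def by (rule measurable_sdrop)
  then have "(\<lambda>\<omega>. h x (sdrop n \<omega>)) \<in> borel_measurable srw_steps" for x
    by (rule measurable_compose) (rule h)
  then have "(\<lambda>\<omega>. h (walk w \<omega> n) (sdrop n \<omega>)) \<in> borel_measurable srw_steps"
    by (rule measurable_compose_countable[where f = "\<lambda>x \<omega>. h x (sdrop n \<omega>)"]) measurable
  then have "(\<integral>\<^sup>+\<omega>. f \<omega> * h (walk w \<omega> n) (sdrop n \<omega>) \<partial>srw_steps)
       = (\<integral>\<^sup>+\<omega>. \<integral>\<^sup>+\<omega>'. f (stake n \<omega> @- \<omega>') * h (walk w (stake n \<omega> @- \<omega>') n) \<omega>'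
             \<partial>srw_steps \<partial>srw_steps)"
    by (subst nn_integral_srw_steps_stake_shift[where n = n]) (simp_all add: sdrop_shift)
  also have "\<dots> = (\<integral>\<^sup>+\<omega>. \<integral>\<^sup>+\<omega>'. f \<omega> * h (walk w \<omega> n) \<omega>' \<partial>srw_steps \<partial>srw_steps)"
  proof (intro nn_integral_cong)
    fix \<omega> \<omega>' :: "'a pt stream"
    have st: "stake n (stake n \<omega> @- \<omega>') = stake n \<omega>" by (simp add: stake_shift)
    show "f (stake n \<omega> @- \<omega>') * h (walk w (stake n \<omega> @- \<omega>') n) \<omega>' = f \<omega> * h (walk w \<omega> n) \<omega>'"
      using f[OF st] walk_cong_stake[OF st order_refl] by simp
  qed
  finally show ?thesis
    by (simp add: nn_integral_cmult)
qed

lemma nn_integral_cl_term_mult_tail_le: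
  assumes total_le: "\<And>w'. w' \<in> V \<Longrightarrow> (\<integral>\<^sup>+\<omega>. cl_total B V g (walk w' \<omega>) \<partial>srw_steps) \<le> S"
  shows "(\<integral>\<^sup>+\<omega>. cl_term B V g (walk w \<omega>) j * (\<Sum>m. cl_term B V g (walk w \<omega>) (Suc j + m)) \<partial>srw_steps)
       \<le> S * (\<integral>\<^sup>+\<omega>. cl_term B V g (walk w \<omega>) j \<partial>srw_steps)"
proof -
  let ?A = "\<lambda>n \<omega>. cl_term_ending_at B V g (walk w \<omega>) j n"
  let ?T = "\<lambda>x \<omega>'. cl_total B V g (walk x \<omega>')"
  have "(\<integral>\<^sup>+\<omega>. cl_term B V g (walk w \<omega>) j * (\<Sum>m. cl_term B V g (walk w \<omega>) (Suc j + m)) \<partial>srw_steps)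
      = (\<Sum>n. \<integral>\<^sup>+\<omega>. ?A n \<omega> * (\<Sum>m. cl_term B V g (walk w \<omega>) (Suc j + m)) \<partial>srw_steps)"
    by (simp only: cl_term_mult_tail) (rule nn_integral_suminf, measurable)
  also have "\<dots> = (\<Sum>n. \<integral>\<^sup>+\<omega>. ?A n \<omega> * ?T (walk w \<omega> n) (sdrop n \<omega>) \<partial>srw_steps)"
    by (simp only: cl_term_ending_at_mult_tail walk_shift)
  also have "\<dots> = (\<Sum>n. \<integral>\<^sup>+\<omega>. ?A n \<omega> * (\<integral>\<^sup>+\<omega>'. ?T (walk w \<omega> n) \<omega>' \<partial>srw_steps) \<partial>srw_steps)"
    by (intro suminf_cong nn_integral_srw_markov) (blast intro: cl_term_ending_at_cong walk_cong_stake, simp)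
  also have "\<dots> \<le> (\<Sum>n. \<integral>\<^sup>+\<omega>. ?A n \<omega> * S \<partial>srw_steps)"
  proof (intro suminf_le nn_integral_mono summableI)
    fix n \<omega>
    show "?A n \<omega> * (\<integral>\<^sup>+\<omega>'. ?T (walk w \<omega> n) \<omega>' \<partial>srw_steps) \<le> ?A n \<omega> * S"
    proof (cases "?A n \<omega> = 0")
      case False
      then have "walk w \<omega> n \<in> V" by (rule cl_term_ending_at_neq_0D)
      then show ?thesis by (intro mult_left_mono total_le) simp_all
    qed simp
  qed
  also have "\<dots> = (\<Sum>n. (\<integral>\<^sup>+\<omega>. ?A n \<omega> \<partial>srw_steps) * S)"
    by (intro suminf_cong nn_integral_multc) measurable
  also have "\<dots> = S * (\<integral>\<^sup>+\<omega>. (\<Sum>n. ?A n \<omega>) \<partial>srw_steps)"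
    by (subst nn_integral_suminf) (measurable, simp add: mult.commute)
  also have "\<dots> \<le> S * (\<integral>\<^sup>+\<omega>. cl_term B V g (walk w \<omega>) j \<partial>srw_steps)"
    by (intro mult_left_mono nn_integral_mono suminf_cl_term_ending_at_le) simp
  finally show ?thesis .
qed

section \<open>Second moment of the soft local time\<close>

definition soft_local_time ::
    "'d::finite pt set \<Rightarrow> 'd pt set \<Rightarrow> ('d pt \<Rightarrow> 'd pt \<Rightarrow> ennreal) \<Rightarrow> 'd pt
     \<Rightarrow> 'd pt stream \<times> real stream \<Rightarrow> ennreal" where
  "soft_local_time B V g w z = (\<Sum>k. ennreal (snd z !! k) * cl_term B V g (walk w (fst z)) k)"

lemma measurable_soft_local_time [measurable]:
  "soft_local_time B V g w \<in> borel_measurable (srw_steps \<Otimes>\<^sub>M stream_space exp1)"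
proof -
  have [measurable]: "(\<lambda>z. cl_term B V g (walk w (fst z)) k)
      \<in> borel_measurable (srw_steps \<Otimes>\<^sub>M stream_space exp1)" for k
    by (rule measurable_compose[OF measurable_fst]) simp
  show ?thesis
    unfolding soft_local_time_def by measurable
qed

lemma nn_integral_joint:
  assumes "f \<in> borel_measurable (srw_steps \<Otimes>\<^sub>M stream_space exp1)"
  shows "(\<integral>\<^sup>+z. f z \<partial>joint) = (\<integral>\<^sup>+\<omega>. \<integral>\<^sup>+\<xi>. f (\<omega>, \<xi>) \<partial>stream_space exp1 \<partial>srw_steps)"
proof -
  interpret E: prob_space "stream_space exp1"
    by (rule prob_space.prob_space_stream_space[OF prob_space_exp1])
  show ?thesis
    unfolding joint_def by (rule E.nn_integral_fst[OF assms, symmetric])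
qed

lemma nn_integral_soft_local_time:
  "(\<integral>\<^sup>+z. soft_local_time B V g w z \<partial>joint) = (\<integral>\<^sup>+\<omega>. cl_total B V g (walk w \<omega>) \<partial>srw_steps)"
  by (simp add: nn_integral_joint soft_local_time_def nn_integral_exp1_weighted_sum cl_total_def)

lemma nn_integral_soft_local_time_square:
  "(\<integral>\<^sup>+z. (soft_local_time B V g w z)\<^sup>2 \<partial>joint)
     = (\<integral>\<^sup>+\<omega>. 2 * (\<Sum>j. cl_term B V g (walk w \<omega>) j * (\<Sum>m. cl_term B V g (walk w \<omega>) (j + m))) \<partial>srw_steps)"
  by (simp add: nn_integral_joint soft_local_time_def nn_integral_exp1_weighted_sum_square
           del: ennreal_suminf_cmult)

lemma nn_integral_soft_local_time_square_le:
  assumes "w \<in> V"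
    and g_le: "\<And>w y. w \<in> V \<Longrightarrow> y \<in> B \<Longrightarrow> g w y \<le> c"
    and total_le: "\<And>w'. w' \<in> V \<Longrightarrow> (\<integral>\<^sup>+\<omega>. cl_total B V g (walk w' \<omega>) \<partial>srw_steps) \<le> S"
  shows "(\<integral>\<^sup>+z. (soft_local_time B V g w z)\<^sup>2 \<partial>joint)
       \<le> 2 * (\<integral>\<^sup>+z. soft_local_time B V g w z \<partial>joint) * (S + c)"
proof -
  let ?c = "\<lambda>j \<omega>. cl_term B V g (walk w \<omega>) j"
  have split: "?c j \<omega> * (\<Sum>m. ?c (j + m) \<omega>) = ?c j \<omega> * ?c j \<omega> + ?c j \<omega> * (\<Sum>m. ?c (Suc j + m) \<omega>)" for j \<omega>
    using ennreal_suminf_split_head[of "\<lambda>m. ?c (j + m) \<omega>"] by (simp add: distrib_left)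
  have "(\<integral>\<^sup>+z. (soft_local_time B V g w z)\<^sup>2 \<partial>joint)
      = 2 * (\<Sum>j. (\<integral>\<^sup>+\<omega>. ?c j \<omega> * ?c j \<omega> \<partial>srw_steps) + (\<integral>\<^sup>+\<omega>. ?c j \<omega> * (\<Sum>m. ?c (Suc j + m) \<omega>) \<partial>srw_steps))"
    unfolding nn_integral_soft_local_time_square split
    by (subst nn_integral_cmult, measurable, subst nn_integral_suminf, measurable)
       (simp add: nn_integral_add)
  also have "\<dots> \<le> 2 * (\<Sum>j. c * (\<integral>\<^sup>+\<omega>. ?c j \<omega> \<partial>srw_steps) + S * (\<integral>\<^sup>+\<omega>. ?c j \<omega> \<partial>srw_steps))"
  proof (intro mult_left_mono suminf_le summableI add_mono)
    fix j
    have "(\<integral>\<^sup>+\<omega>. ?c j \<omega> * ?c j \<omega> \<partial>srw_steps) \<le> (\<integral>\<^sup>+\<omega>. c * ?c j \<omega> \<partial>srw_steps)"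
      by (intro nn_integral_mono mult_right_mono cl_term_le g_le) (simp_all add: \<open>w \<in> V\<close>)
    then show "(\<integral>\<^sup>+\<omega>. ?c j \<omega> * ?c j \<omega> \<partial>srw_steps) \<le> c * (\<integral>\<^sup>+\<omega>. ?c j \<omega> \<partial>srw_steps)"
      by (simp add: nn_integral_cmult)
    show "(\<integral>\<^sup>+\<omega>. ?c j \<omega> * (\<Sum>m. ?c (Suc j + m) \<omega>) \<partial>srw_steps) \<le> S * (\<integral>\<^sup>+\<omega>. ?c j \<omega> \<partial>srw_steps)"
      by (rule nn_integral_cl_term_mult_tail_le[OF total_le])
  qed simp
  also have "\<dots> = 2 * (\<integral>\<^sup>+z. soft_local_time B V g w z \<partial>joint) * (S + c)"
    unfolding nn_integral_soft_local_time cl_total_def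
    by (subst nn_integral_suminf) (measurable, simp add: distrib_right[symmetric] ac_simps)
  finally show ?thesis .
qed

theorem proposition4p2:
  fixes A1 :: "'d::finite pt set" and r s :: real and w0 a b :: "'d pt"
  assumes "CARD('d) \<ge> 3" and "0 < s" and "s < r"
    and "A1 = ball_set r \<or> A1 = nbhd s (cube_set (r - s))"
    and "w0 \<in> V_of s A1" and "a \<in> bdry A1" and "b \<in> V_of s A1"
  shows "(\<integral>\<^sup>+ z. (softG s A1 w0 a b z)^2 \<partial>joint)
     \<le> 2 * (\<integral>\<^sup>+ z. softG s A1 w0 a b z \<partial>joint)
         * ((SUP w'\<in>V_of s A1. \<integral>\<^sup>+ z. softG s A1 w' a b z \<partial>joint)
            + (SUP (w, y)\<in>V_of s A1 \<times> bdry (A2_of s A1). ennreal (gfun s A1 w y a b)))"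
proof -
  define B where "B = bdry (A2_of s A1)"
  define V where "V = V_of s A1"
  define g where "g = (\<lambda>w y. ennreal (gfun s A1 w y a b))"
  have softG_eq: "softG s A1 w a b = soft_local_time B V g w" for w
    by (rule ext) (simp add: softG_def soft_local_time_def cl_term_def B_def V_def g_def Let_def)
  show ?thesis
    unfolding softG_eq
  proof (rule nn_integral_soft_local_time_square_le)
    show "w0 \<in> V" using \<open>w0 \<in> V_of s A1\<close> by (simp add: V_def)
    show "g w y \<le> (SUP (w, y)\<in>V_of s A1 \<times> bdry (A2_of s A1). ennreal (gfun s A1 w y a b))"
      if "w \<in> V" "y \<in> B" for w y
      using that by (auto simp: g_def B_def V_def intro: SUP_upper2)
    show "(\<integral>\<^sup>+\<omega>. cl_total B V g (walk w' \<omega>) \<partial>srw_steps)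
        \<le> (SUP w'\<in>V_of s A1. \<integral>\<^sup>+ z. soft_local_time B V g w' z \<partial>joint)" if "w' \<in> V" for w'
      using that by (auto simp: V_def simp flip: nn_integral_soft_local_time intro: SUP_upper)
  qed
qed

end
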